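(* (a) For every threshold function $f$ it holds that $NN(f)=2$. (b) If $n$ is odd then $BNN(MAJ_n)=2$, and if $n$ is even then $BNN(MAJ_n)\le \frac n2+2$. (c) $BNN\left(TH_n^{\lfloor n/3\rfloor}\right)=2^{\Omega(n)}$.
   Context: For a Boolean function $f:\{0,1\}^n\to\{0,1\}$, points $a$ with $f(a)=1$ are positive and those with $f(a)=0$ negative. A nearest neighbor representation of $f$ is a pair of disjoint sets $(P,N)$ of points of $\mathbb R^n$ such that for every $a\in\{0,1\}^n$: if $a$ is positive, there is $b\in P$ with $d(a,b)<d(a,c)$ for all $c\in N$; if $a$ is negative, there is $b\in N$ with $d(a,b)<d(a,c)$ for all $c\in P$ ($d$ = Euclidean distance). Its size is $|P\cup N|$. $NN(f)$ is the minimum size of a nearest neighbor representation of $f$; $BNN(f)$ is the minimum size of one with $P\cup N\subseteq\{0,1\}^n$. A Boolean function $f$ is a threshold function if there are $w_1,\dots,w_n,t\in\mathbb R$ with $f(x)=1$ iff $w_1x_1+\dots+w_nx_n\ge t$ for all $x\in\{0,1\}^n$. $TH_n^t$ denotes the $n$-variable function with $TH_n^t(x)=1$ iff $x_1+\dots+x_n\ge t$, and $MAJ_n=TH_n^{n/2}$. In (c), $n\to\infty$. *)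

theory Defs
  imports Complex_Main
begin

text \<open>Points of R^n are functions nat => real vanishing outside {0..<n}.\<close>

definition euc :: "nat \<Rightarrow> (nat \<Rightarrow> real) set" where
  "euc n = {x. \<forall>i\<ge>n. x i = 0}"

definition cube :: "nat \<Rightarrow> (nat \<Rightarrow> real) set" where
  "cube n = {x. (\<forall>i<n. x i = 0 \<or> x i = 1) \<and> (\<forall>i\<ge>n. x i = 0)}"

definition edist :: "nat \<Rightarrow> (nat \<Rightarrow> real) \<Rightarrow> (nat \<Rightarrow> real) \<Rightarrow> real" where
  "edist n a b = sqrt (\<Sum>i<n. (a i - b i)^2)"

text \<open>A Boolean function on n variables: only its values on cube n matter.\<close>

definition nn_rep :: "nat \<Rightarrow> ((nat \<Rightarrow> real) \<Rightarrow> bool) \<Rightarrow> (nat \<Rightarrow> real) set \<Rightarrow> (nat \<Rightarrow> real) set \<Rightarrow> bool" where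
  "nn_rep n f P N \<longleftrightarrow>
     P \<subseteq> euc n \<and> N \<subseteq> euc n \<and> finite P \<and> finite N \<and> P \<inter> N = {} \<and>
     (\<forall>a\<in>cube n.
        (f a \<longrightarrow> (\<exists>b\<in>P. \<forall>c\<in>N. edist n a b < edist n a c)) \<and>
        (\<not> f a \<longrightarrow> (\<exists>b\<in>N. \<forall>c\<in>P. edist n a b < edist n a c)))"

definition NN :: "nat \<Rightarrow> ((nat \<Rightarrow> real) \<Rightarrow> bool) \<Rightarrow> nat" where
  "NN n f = (LEAST k. \<exists>P N. nn_rep n f P N \<and> card (P \<union> N) = k)"

definition BNN :: "nat \<Rightarrow> ((nat \<Rightarrow> real) \<Rightarrow> bool) \<Rightarrow> nat" where
  "BNN n f = (LEAST k. \<exists>P N. nn_rep n f P N \<and> P \<union> N \<subseteq> cube n \<and> card (P \<union> N) = k)"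

definition threshold_fun :: "nat \<Rightarrow> ((nat \<Rightarrow> real) \<Rightarrow> bool) \<Rightarrow> bool" where
  "threshold_fun n f \<longleftrightarrow>
     (\<exists>(w :: nat \<Rightarrow> real) (t :: real). \<forall>x\<in>cube n. f x \<longleftrightarrow> (\<Sum>i<n. w i * x i) \<ge> t)"

definition TH :: "nat \<Rightarrow> real \<Rightarrow> (nat \<Rightarrow> real) \<Rightarrow> bool" where
  "TH n t x \<longleftrightarrow> (\<Sum>i<n. x i) \<ge> t"

definition MAJ :: "nat \<Rightarrow> (nat \<Rightarrow> real) \<Rightarrow> bool" where
  "MAJ n = TH n (real n / 2)"

end

(*
  (a) A threshold function is strictly separated by a hyperplane w . x = t, and the two points
  (c + 1) w and (c - 1) w, mirror images in that hyperplane, classify every point by its side.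

  (b), (c) On the cube the Euclidean distance is the square root of the Hamming distance, so a
  Boolean representation is a pair of families of sets compared by sizes of symmetric differences.
  For odd n, majority is represented by the full and the empty set; for even n, by the sets
  {..<n} - {i} with i <= n/2 against the empty set. The lower bound 2 for odd n follows from (a),
  as MAJ_n is a threshold function and NN <= BNN.
  For the threshold k = n div 3, every k-set S lies inside a positive prototype with fewer than
  2k elements. Hence the C(n,k) sets of size k are covered by the positive prototypes, each
  containing at most C(2k-1,k) of them, and |P| >= C(n,k) / C(2k-1,k) >= (n/(2k-1))^k >= (3/2)^k.
*)

theory Submission
  imports Defs "HOL-Library.Indicator_Function"
begin

section \<open>Hamming distance\<close>

definition hamming_dist :: "nat set \<Rightarrow> nat set \<Rightarrow> nat" where
  "hamming_dist S T = card (sym_diff S T)"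

lemma hamming_dist_card:
  assumes "finite S" "finite T"
  shows "hamming_dist S T + 2 * card (S \<inter> T) = card S + card T"
proof -
  have "hamming_dist S T = card (S - T) + card (T - S)"
    unfolding hamming_dist_def by (rule card_Un_disjoint) (use assms in auto)
  moreover have "card S = card (S \<inter> T) + card (S - T)" "card T = card (T \<inter> S) + card (T - S)"
    using assms by (simp_all add: card_Int_Diff)
  ultimately show ?thesis by (simp add: Int_commute)
qed

lemma hamming_dist_self [simp]: "hamming_dist S S = 0"
  by (simp add: hamming_dist_def)

lemma hamming_dist_pos:
  assumes "finite S" "finite T" "S \<noteq> T"
  shows "0 < hamming_dist S T"
  using assms by (auto simp: hamming_dist_def card_gt_0_iff)

lemma hamming_dist_empty [simp]: "hamming_dist S {} = card S"
  by (simp add: hamming_dist_def)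

lemma hamming_dist_lessThan:
  assumes "S \<subseteq> {..<n}"
  shows "hamming_dist S {..<n} + card S = n"
proof -
  have "S \<inter> {..<n} = S" using assms by blast
  then show ?thesis
    using hamming_dist_card[of S "{..<n}"] assms finite_subset by fastforce
qed

lemma hamming_dist_lessThan_remove:
  assumes "S \<subseteq> {..<n}" "i < n"
  shows "hamming_dist S ({..<n} - {i}) + 2 * card (S - {i}) + 1 = card S + n"
proof -
  have "S \<inter> ({..<n} - {i}) = S - {i}" using assms by blast
  then show ?thesis
    using hamming_dist_card[of S "{..<n} - {i}"] assms finite_subset by fastforce
qed

lemma hamming_dist_insert_mem:
  assumes "finite T" "finite X" "j \<notin> T" "j \<in> X"
  shows "hamming_dist T X = Suc (hamming_dist (insert j T) X)"
proof -
  have "insert j T \<inter> X = insert j (T \<inter> X)" using assms(4) by blast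
  then show ?thesis
    using hamming_dist_card[of T X] hamming_dist_card[of "insert j T" X] assms by simp
qed

lemma hamming_dist_insert_nonmem:
  assumes "finite T" "finite X" "j \<notin> T" "j \<notin> X"
  shows "hamming_dist (insert j T) X = Suc (hamming_dist T X)"
proof -
  have "insert j T \<inter> X = T \<inter> X" using assms(4) by blast
  then show ?thesis
    using hamming_dist_card[of T X] hamming_dist_card[of "insert j T" X] assms by simp
qed

lemma hamming_dist_insert_le:
  assumes "finite T" "finite X" "j \<notin> T"
  shows "hamming_dist (insert j T) X \<le> Suc (hamming_dist T X)"
    and "hamming_dist T X \<le> Suc (hamming_dist (insert j T) X)"
  using hamming_dist_insert_mem[OF assms] hamming_dist_insert_nonmem[OF assms]
  by (cases "j \<in> X"; linarith)+

lemma hamming_dist_insert_separates: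
  assumes fin: "finite T" "finite B" "finite C" and j: "j \<notin> T"
    and closer_ins: "hamming_dist (insert j T) B < hamming_dist (insert j T) C"
    and closer: "hamming_dist T C < hamming_dist T B"
  shows "j \<in> B" and "j \<notin> C"
proof -
  show "j \<in> B"
  proof (rule ccontr)
    assume "j \<notin> B"
    then show False
      using hamming_dist_insert_nonmem[OF fin(1,2) j] hamming_dist_insert_le(1)[OF fin(1,3) j]
        closer_ins closer by linarith
  qed
  show "j \<notin> C"
  proof
    assume "j \<in> C"
    then show False
      using hamming_dist_insert_mem[OF fin(1,3) j] hamming_dist_insert_le(2)[OF fin(1,2) j]
        closer_ins closer by linarith
  qed
qed

section \<open>Points of the cube as sets\<close>

definition ones :: "nat \<Rightarrow> (nat \<Rightarrow> real) \<Rightarrow> nat set" where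
  "ones n x = {i. i < n \<and> x i = 1}"

lemma ones_subset: "ones n x \<subseteq> {..<n}"
  by (auto simp: ones_def)

lemma indicator_in_cube: "S \<subseteq> {..<n} \<Longrightarrow> indicat_real S \<in> cube n"
  by (auto simp: cube_def indicator_def)

lemma indicator_ones: "x \<in> cube n \<Longrightarrow> indicat_real (ones n x) = x"
  by (rule ext) (auto simp: cube_def ones_def indicator_def not_less dest: leI)

lemma inj_indicat_real: "inj indicat_real"
proof (rule injI)
  fix S T :: "'a set"
  assume "indicat_real S = indicat_real T"
  then show "S = T"
    by (metis indicator_eq_0_iff indicator_simps(1) zero_neq_one subsetI subset_antisym)
qed

lemma cube_eq_indicator_image: "cube n = indicat_real ` Pow {..<n}"
proof
  show "cube n \<subseteq> indicat_real ` Pow {..<n}"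
    using indicator_ones ones_subset by (metis PowI image_eqI subsetI)
qed (auto intro: indicator_in_cube)

lemma finite_cube: "finite (cube n)"
  by (simp add: cube_eq_indicator_image)

lemma cube_subset_euc: "cube n \<subseteq> euc n"
  by (auto simp: cube_def euc_def)

lemma sum_indicator_lessThan:
  "S \<subseteq> {..<n} \<Longrightarrow> (\<Sum>i<n. indicat_real S i) = real (card S)" for n :: nat
  unfolding indicator_def by (subst sum_of_bool_eq) (auto simp: Int_absorb1)

lemma edist_indicator:
  assumes "S \<subseteq> {..<n}" "T \<subseteq> {..<n}"
  shows "edist n (indicat_real S) (indicat_real T) = sqrt (real (hamming_dist S T))"
proof -
  have "(\<Sum>i<n. (indicat_real S i - indicat_real T i)\<^sup>2) = (\<Sum>i<n. indicat_real (sym_diff S T) i)"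
    by (rule sum.cong) (auto simp: indicator_def)
  also have "\<dots> = real (hamming_dist S T)"
    using assms by (subst sum_indicator_lessThan) (auto simp: hamming_dist_def)
  finally show ?thesis by (simp add: edist_def)
qed

section \<open>Boolean representations as families of sets\<close>

definition hamming_rep :: "nat \<Rightarrow> (nat set \<Rightarrow> bool) \<Rightarrow> nat set set \<Rightarrow> nat set set \<Rightarrow> bool" where
  "hamming_rep n g P N \<longleftrightarrow> P \<union> N \<subseteq> Pow {..<n} \<and> P \<inter> N = {} \<and>
     (\<forall>S. S \<subseteq> {..<n} \<longrightarrow>
        (g S \<longrightarrow> (\<exists>B\<in>P. \<forall>C\<in>N. hamming_dist S B < hamming_dist S C)) \<and>
        (\<not> g S \<longrightarrow> (\<exists>C\<in>N. \<forall>B\<in>P. hamming_dist S C < hamming_dist S B)))"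

lemma hamming_rep_cong:
  "(\<And>S. S \<subseteq> {..<n} \<Longrightarrow> g S = g' S) \<Longrightarrow> hamming_rep n g P N = hamming_rep n g' P N"
  unfolding hamming_rep_def by auto

lemma hamming_rep_finite: "hamming_rep n g P N \<Longrightarrow> B \<in> P \<union> N \<Longrightarrow> finite B"
  unfolding hamming_rep_def by (meson PowD finite_lessThan finite_subset in_mono)

lemma hamming_rep_positive_witness:
  "hamming_rep n g P N \<Longrightarrow> S \<subseteq> {..<n} \<Longrightarrow> g S \<Longrightarrow>
    \<exists>B\<in>P. \<forall>C\<in>N. hamming_dist S B < hamming_dist S C"
  unfolding hamming_rep_def by blast

lemma hamming_rep_negative_witness:
  "hamming_rep n g P N \<Longrightarrow> S \<subseteq> {..<n} \<Longrightarrow> \<not> g S \<Longrightarrow>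
    \<exists>C\<in>N. \<forall>B\<in>P. hamming_dist S C < hamming_dist S B"
  unfolding hamming_rep_def by blast

lemma hamming_rep_trivial: "hamming_rep n g {S. S \<subseteq> {..<n} \<and> g S} {S. S \<subseteq> {..<n} \<and> \<not> g S}"
proof -
  have pos: "0 < hamming_dist S T" if "S \<subseteq> {..<n}" "T \<subseteq> {..<n}" "S \<noteq> T" for S T
    using that by (intro hamming_dist_pos) (auto intro: finite_subset)
  let ?P = "{S. S \<subseteq> {..<n} \<and> g S}" and ?N = "{S. S \<subseteq> {..<n} \<and> \<not> g S}"
  show ?thesis
    unfolding hamming_rep_def
  proof (intro conjI allI impI)
    fix S assume S: "S \<subseteq> {..<n}"
    show "\<exists>B\<in>?P. \<forall>C\<in>?N. hamming_dist S B < hamming_dist S C" if "g S"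
      using that S pos by (intro bexI[of _ S]) auto
    show "\<exists>C\<in>?N. \<forall>B\<in>?P. hamming_dist S C < hamming_dist S B" if "\<not> g S"
      using that S pos by (intro bexI[of _ S]) auto
  qed auto
qed

lemma nn_rep_indicator_iff:
  assumes PN: "P \<union> N \<subseteq> Pow {..<n}"
  shows "nn_rep n f (indicat_real ` P) (indicat_real ` N) \<longleftrightarrow> hamming_rep n (\<lambda>S. f (indicat_real S)) P N"
proof -
  have "finite P" "finite N"
    using PN by (auto intro: finite_subset[of _ "Pow {..<n}"])
  moreover have "indicat_real ` P \<union> indicat_real ` N \<subseteq> euc n"
    using PN indicator_in_cube cube_subset_euc by blast
  moreover have "indicat_real ` P \<inter> indicat_real ` N = indicat_real ` (P \<inter> N)"
    using inj_indicat_real by (rule image_Int[symmetric])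
  moreover have "edist n (indicat_real S) (indicat_real B) < edist n (indicat_real S) (indicat_real C) \<longleftrightarrow>
      hamming_dist S B < hamming_dist S C"
    if "S \<subseteq> {..<n}" "B \<in> P \<union> N" "C \<in> P \<union> N" for S B C
  proof -
    have "B \<subseteq> {..<n}" "C \<subseteq> {..<n}" using that PN by auto
    then show ?thesis using that(1) by (simp add: edist_indicator)
  qed
  ultimately show ?thesis
    unfolding nn_rep_def hamming_rep_def cube_eq_indicator_image using PN by auto
qed

lemma card_image_indicator: "card (indicat_real ` A) = card A"
  by (rule card_image) (rule inj_on_subset[OF inj_indicat_real], simp)

lemma card_image_ones: "A \<subseteq> cube n \<Longrightarrow> card (ones n ` A) = card A"
  by (rule card_image) (rule inj_on_inverseI[of _ indicat_real], auto simp: indicator_ones)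

lemma nn_rep_indicator_image:
  assumes rep: "hamming_rep n (\<lambda>S. f (indicat_real S)) P N"
  shows "nn_rep n f (indicat_real ` P) (indicat_real ` N)"
    and "indicat_real ` P \<union> indicat_real ` N \<subseteq> cube n"
    and "card (indicat_real ` P \<union> indicat_real ` N) = card (P \<union> N)"
proof -
  have Pow: "P \<union> N \<subseteq> Pow {..<n}"
    using rep by (simp add: hamming_rep_def)
  show "nn_rep n f (indicat_real ` P) (indicat_real ` N)"
    using nn_rep_indicator_iff[OF Pow] rep by simp
  show "indicat_real ` P \<union> indicat_real ` N \<subseteq> cube n"
    using Pow indicator_in_cube by blast
  show "card (indicat_real ` P \<union> indicat_real ` N) = card (P \<union> N)"
    using card_image_indicator[of "P \<union> N"] by (simp add: image_Un)
qed

lemma hamming_rep_ones_image: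
  assumes rep: "nn_rep n f P N" and cube: "P \<union> N \<subseteq> cube n"
  shows "hamming_rep n (\<lambda>S. f (indicat_real S)) (ones n ` P) (ones n ` N)"
    and "card (ones n ` P \<union> ones n ` N) = card (P \<union> N)"
proof -
  have "indicat_real ` ones n ` X = X" if "X \<subseteq> cube n" for X
    using that indicator_ones by (force simp: image_image)
  then have "nn_rep n f (indicat_real ` ones n ` P) (indicat_real ` ones n ` N)"
    using rep cube by simp
  moreover have Pow: "ones n ` P \<union> ones n ` N \<subseteq> Pow {..<n}"
    using ones_subset by blast
  ultimately show "hamming_rep n (\<lambda>S. f (indicat_real S)) (ones n ` P) (ones n ` N)"
    using nn_rep_indicator_iff[OF Pow] by simp
  show "card (ones n ` P \<union> ones n ` N) = card (P \<union> N)"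
    using card_image_ones[OF cube] by (simp add: image_Un)
qed

lemma BNN_eq_Least_hamming_rep:
  "BNN n f = (LEAST k. \<exists>P N. hamming_rep n (\<lambda>S. f (indicat_real S)) P N \<and> card (P \<union> N) = k)"
proof -
  have "(\<exists>P N. nn_rep n f P N \<and> P \<union> N \<subseteq> cube n \<and> card (P \<union> N) = k) \<longleftrightarrow>
        (\<exists>P N. hamming_rep n (\<lambda>S. f (indicat_real S)) P N \<and> card (P \<union> N) = k)" for k
    using hamming_rep_ones_image nn_rep_indicator_image by metis
  then show ?thesis
    unfolding BNN_def by simp
qed

lemma BNN_le_hamming_rep: "hamming_rep n (\<lambda>S. f (indicat_real S)) P N \<Longrightarrow> BNN n f \<le> card (P \<union> N)"
  unfolding BNN_eq_Least_hamming_rep by (rule Least_le) blast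

lemma hamming_rep_card_BNN: "\<exists>P N. hamming_rep n (\<lambda>S. f (indicat_real S)) P N \<and> card (P \<union> N) = BNN n f"
  unfolding BNN_eq_Least_hamming_rep by (rule LeastI_ex) (use hamming_rep_trivial in blast)

lemma BNN_le_two_pow: "BNN n f \<le> 2 ^ n"
proof -
  have "{S. S \<subseteq> {..<n} \<and> f (indicat_real S)} \<union> {S. S \<subseteq> {..<n} \<and> \<not> f (indicat_real S)} = Pow {..<n}"
    by auto
  then show ?thesis
    using BNN_le_hamming_rep[OF hamming_rep_trivial, of n f] by (simp add: card_Pow)
qed

lemma NN_le_BNN: "NN n f \<le> BNN n f"
proof -
  obtain P N where rep: "hamming_rep n (\<lambda>S. f (indicat_real S)) P N" and "card (P \<union> N) = BNN n f"
    using hamming_rep_card_BNN by blast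
  then show ?thesis
    unfolding NN_def using nn_rep_indicator_image[OF rep] by (intro Least_le) auto
qed

section \<open>Threshold functions\<close>

lemma nn_rep_card_ge_2:
  assumes rep: "nn_rep n f P N" and pos: "a \<in> cube n" "f a" and neg: "a' \<in> cube n" "\<not> f a'"
  shows "2 \<le> card (P \<union> N)"
proof -
  obtain p where "p \<in> P" using rep pos unfolding nn_rep_def by blast
  moreover obtain q where "q \<in> N" using rep neg unfolding nn_rep_def by blast
  moreover have "finite (P \<union> N)" "P \<inter> N = {}" using rep unfolding nn_rep_def by auto
  ultimately have "card {p, q} \<le> card (P \<union> N)" "p \<noteq> q"
    by (auto intro: card_mono)
  then show ?thesis by simp
qed

lemma threshold_fun_strict:
  assumes "threshold_fun n f"
  obtains w t where "w \<in> euc n"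
    and "\<forall>x\<in>cube n. (f x \<longrightarrow> t < (\<Sum>i<n. w i * x i)) \<and> (\<not> f x \<longrightarrow> (\<Sum>i<n. w i * x i) < t)"
proof -
  obtain w0 t0 where wt0: "\<forall>x\<in>cube n. f x \<longleftrightarrow> (\<Sum>i<n. w0 i * x i) \<ge> t0"
    using assms unfolding threshold_fun_def by blast
  define w where "w i = (if i < n then w0 i else 0)" for i
  have L: "(\<Sum>i<n. w i * x i) = (\<Sum>i<n. w0 i * x i)" for x
    by (simp add: w_def)
  define m where "m = Max (insert (t0 - 1) ((\<lambda>x. \<Sum>i<n. w i * x i) ` {x \<in> cube n. \<not> f x}))"
  have m_below: "(\<Sum>i<n. w i * x i) \<le> m" if "x \<in> cube n" "\<not> f x" for x
    unfolding m_def using that finite_cube by (intro Max_ge) auto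
  have "m < t0"
    unfolding m_def using wt0 finite_cube L by (subst Max_less_iff) auto
  then have "\<forall>x\<in>cube n. (f x \<longrightarrow> (m + t0) / 2 < (\<Sum>i<n. w i * x i)) \<and>
      (\<not> f x \<longrightarrow> (\<Sum>i<n. w i * x i) < (m + t0) / 2)"
    using wt0 m_below L by force
  moreover have "w \<in> euc n"
    by (simp add: w_def euc_def)
  ultimately show ?thesis using that by blast
qed

lemma sum_sq_diff_reflect:
  fixes x w :: "nat \<Rightarrow> real"
  shows "(\<Sum>i<n. (x i - (c + 1) * w i)\<^sup>2) - (\<Sum>i<n. (x i - (c - 1) * w i)\<^sup>2)
    = 4 * (c * (\<Sum>i<n. (w i)\<^sup>2) - (\<Sum>i<n. w i * x i))"
proof -
  have "(\<Sum>i<n. (x i - (c + 1) * w i)\<^sup>2) - (\<Sum>i<n. (x i - (c - 1) * w i)\<^sup>2)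
      = (\<Sum>i<n. 4 * (c * (w i)\<^sup>2 - w i * x i))"
    by (subst sum_subtractf[symmetric]) (rule sum.cong; simp add: power2_eq_square algebra_simps)
  also have "\<dots> = 4 * (c * (\<Sum>i<n. (w i)\<^sup>2) - (\<Sum>i<n. w i * x i))"
    by (simp add: sum_distrib_left sum_subtractf)
  finally show ?thesis .
qed

text \<open>The two points are \<open>(c \<pm> 1) w\<close>, mirror images in the separating hyperplane
  \<open>w \<bullet> x = t\<close>, whose foot point on the line \<open>\<real> w\<close> is \<open>c w\<close>.\<close>
lemma nn_rep_two_points:
  assumes w: "w \<in> euc n"
    and sep: "\<forall>x\<in>cube n. (f x \<longrightarrow> t < (\<Sum>i<n. w i * x i)) \<and> (\<not> f x \<longrightarrow> (\<Sum>i<n. w i * x i) < t)"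
    and pos: "a \<in> cube n" "f a" and neg: "a' \<in> cube n" "\<not> f a'"
  shows "\<exists>P N. nn_rep n f P N \<and> card (P \<union> N) = 2"
proof -
  define W where "W = (\<Sum>i<n. (w i)\<^sup>2)"
  have "W \<noteq> 0"
  proof
    assume "W = 0"
    then have "\<forall>i<n. w i = 0"
      unfolding W_def by (simp add: sum_nonneg_eq_0_iff)
    then have "t < 0" "0 < t"
      using sep pos neg by auto
    then show False by simp
  qed
  define c where "c = t / W"
  define p where "p i = (c + 1) * w i" for i
  define q where "q i = (c - 1) * w i" for i
  have diff: "(\<Sum>i<n. (x i - p i)\<^sup>2) - (\<Sum>i<n. (x i - q i)\<^sup>2) = 4 * (t - (\<Sum>i<n. w i * x i))" for x
    using sum_sq_diff_reflect[of x c w n] \<open>W \<noteq> 0\<close> by (simp add: p_def q_def c_def W_def)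
  have closer_p: "edist n x p < edist n x q \<longleftrightarrow> t < (\<Sum>i<n. w i * x i)" for x
    unfolding edist_def real_sqrt_less_iff using diff[of x] by argo
  have closer_q: "edist n x q < edist n x p \<longleftrightarrow> (\<Sum>i<n. w i * x i) < t" for x
    unfolding edist_def real_sqrt_less_iff using diff[of x] by argo
  have "p \<noteq> q"
  proof
    assume "p = q"
    then have "\<forall>i. w i = 0"
      by (simp add: p_def q_def fun_eq_iff algebra_simps)
    then show False using \<open>W \<noteq> 0\<close> by (simp add: W_def)
  qed
  moreover have "{p, q} \<subseteq> euc n"
    using w by (simp add: euc_def p_def q_def)
  ultimately have "nn_rep n f {p} {q}"
    using sep closer_p closer_q unfolding nn_rep_def by auto
  then show ?thesis
    using \<open>p \<noteq> q\<close> by (intro exI[of _ "{p}"] exI[of _ "{q}"]) simp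
qed

lemma NN_threshold_fun:
  assumes "threshold_fun n f" and pos: "a \<in> cube n" "f a" and neg: "a' \<in> cube n" "\<not> f a'"
  shows "NN n f = 2"
  unfolding NN_def
proof (rule Least_equality)
  obtain w t where "w \<in> euc n"
    and "\<forall>x\<in>cube n. (f x \<longrightarrow> t < (\<Sum>i<n. w i * x i)) \<and> (\<not> f x \<longrightarrow> (\<Sum>i<n. w i * x i) < t)"
    using threshold_fun_strict[OF assms(1)] by blast
  then show "\<exists>P N. nn_rep n f P N \<and> card (P \<union> N) = 2"
    using nn_rep_two_points pos neg by blast
qed (use nn_rep_card_ge_2[OF _ pos neg] in blast)

section \<open>Majority\<close>

lemma MAJ_indicator: "S \<subseteq> {..<n} \<Longrightarrow> MAJ n (indicat_real S) \<longleftrightarrow> n \<le> 2 * card S"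
proof -
  assume "S \<subseteq> {..<n}"
  then have "MAJ n (indicat_real S) \<longleftrightarrow> real n \<le> real (2 * card S)"
    unfolding MAJ_def TH_def by (simp add: sum_indicator_lessThan mult.commute)
  then show ?thesis by (simp only: of_nat_le_iff)
qed

lemma hamming_rep_MAJ_iff:
  "hamming_rep n (\<lambda>S. MAJ n (indicat_real S)) P N \<longleftrightarrow> hamming_rep n (\<lambda>S. n \<le> 2 * card S) P N"
  by (rule hamming_rep_cong) (rule MAJ_indicator)

lemma threshold_fun_MAJ: "threshold_fun n (MAJ n)"
  unfolding threshold_fun_def MAJ_def TH_def by (intro exI[of _ "\<lambda>_. 1"] exI[of _ "real n / 2"]) simp

lemma hamming_rep_majority_odd:
  assumes "odd n"
  shows "hamming_rep n (\<lambda>S. n \<le> 2 * card S) {{..<n}} {{}}"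
proof -
  have "{..<n} \<noteq> {}" using assms by (auto intro!: exI[of _ 0] odd_pos)
  moreover have "hamming_dist S {..<n} < card S \<longleftrightarrow> n \<le> 2 * card S"
    and "card S < hamming_dist S {..<n} \<longleftrightarrow> \<not> n \<le> 2 * card S"
    if "S \<subseteq> {..<n}" for S
    using hamming_dist_lessThan[OF that] assms by presburger+
  ultimately show ?thesis
    unfolding hamming_rep_def by auto
qed

lemma majority_closer_to_punctured:
  assumes S: "S \<subseteq> {..<n}" and maj: "n \<le> 2 * card S" and n: "n = 2 * k" "0 < k"
  shows "\<exists>i\<in>{..k}. hamming_dist S ({..<n} - {i}) < card S"
proof -
  have fin: "finite S" using S finite_subset by blast
  have dist: "hamming_dist S ({..<n} - {i}) + 2 * card (S - {i}) + 1 = card S + n" if "i \<le> k" for i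
    using hamming_dist_lessThan_remove[OF S] that n by simp
  show ?thesis
  proof (cases "{..k} \<subseteq> S")
    case True
    have "k + 1 \<le> card S"
      using card_mono[OF fin True] by simp
    moreover have "Suc (card (S - {0})) = card S"
      using True by (intro card_Suc_Diff1 fin) auto
    ultimately show ?thesis
      using dist[of 0] n by (intro bexI[of _ 0]) auto
  next
    case False
    then obtain i where "i \<le> k" "i \<notin> S" by auto
    then show ?thesis
      using dist[of i] maj by (intro bexI[of _ i]) auto
  qed
qed

lemma hamming_rep_majority_even:
  assumes "even n" "0 < n"
  shows "hamming_rep n (\<lambda>S. n \<le> 2 * card S) ((\<lambda>i. {..<n} - {i}) ` {..n div 2}) {{}}"
proof -
  let ?k = "n div 2"
  have n: "n = 2 * ?k" "0 < ?k" using assms by auto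
  have neg: "card S < hamming_dist S ({..<n} - {i})"
    if S: "S \<subseteq> {..<n}" and minor: "\<not> n \<le> 2 * card S" and "i \<le> ?k" for S i
  proof -
    have "card (S - {i}) \<le> card S"
      using S finite_subset by (intro card_mono) auto
    moreover have "card S < ?k"
      using minor n by linarith
    moreover have "i < n"
      using \<open>i \<le> ?k\<close> n by linarith
    ultimately show ?thesis
      using hamming_dist_lessThan_remove[OF S] n by fastforce
  qed
  have "(if i = 0 then 1 else 0) \<in> {..<n} - {i}" for i
    using n by auto
  then have "{..<n} - {i} \<noteq> {}" for i
    by blast
  then show ?thesis
    unfolding hamming_rep_def using majority_closer_to_punctured[OF _ _ n] neg by auto
qed

lemma BNN_MAJ_odd:
  assumes "odd n"
  shows "BNN n (MAJ n) = 2"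
proof (rule antisym)
  have "hamming_rep n (\<lambda>S. MAJ n (indicat_real S)) {{..<n}} {{}}"
    using hamming_rep_majority_odd[OF assms] by (simp only: hamming_rep_MAJ_iff)
  moreover have "0 < n"
    using assms odd_pos by blast
  then have "card ({{..<n}} \<union> {{}}) = 2"
    by (auto simp: card_insert_if)
  ultimately show "BNN n (MAJ n) \<le> 2"
    using BNN_le_hamming_rep by metis
  from \<open>0 < n\<close> have "NN n (MAJ n) = 2"
    using NN_threshold_fun[OF threshold_fun_MAJ,
        where a = "indicat_real {..<n}" and a' = "indicat_real {}"]
    by (simp add: indicator_in_cube MAJ_indicator)
  then show "2 \<le> BNN n (MAJ n)"
    using NN_le_BNN by metis
qed

lemma BNN_MAJ_even:
  assumes "even n"
  shows "BNN n (MAJ n) \<le> n div 2 + 2"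
proof (cases "n = 0")
  case True
  then show ?thesis using BNN_le_two_pow[of 0 "MAJ 0"] by simp
next
  case False
  let ?P = "(\<lambda>i. {..<n} - {i}) ` {..n div 2}"
  have "hamming_rep n (\<lambda>S. MAJ n (indicat_real S)) ?P {{}}"
    using hamming_rep_majority_even[OF assms] False by (simp only: hamming_rep_MAJ_iff)
  then have "BNN n (MAJ n) \<le> card (?P \<union> {{}})"
    by (rule BNN_le_hamming_rep)
  also have "\<dots> \<le> card ?P + 1"
    using card_Un_le[of ?P "{{}}"] by simp
  also have "card ?P \<le> n div 2 + 1"
    using card_image_le[of "{..n div 2}"] by simp
  finally show ?thesis by simp
qed

section \<open>The threshold \<open>n div 3\<close>\<close>

lemma threshold_positive_witness_superset:
  assumes rep: "hamming_rep n (\<lambda>S. k \<le> card S) P N"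
    and S: "S \<subseteq> {..<n}" "card S = k"
    and B: "B \<in> P" "\<forall>C\<in>N. hamming_dist S B < hamming_dist S C"
  shows "S \<subseteq> B"
proof
  fix i assume "i \<in> S"
  define T where "T = S - {i}"
  have fin: "finite S" using S(1) finite_subset by blast
  have T: "T \<subseteq> {..<n}" "S = insert i T" "i \<notin> T" "finite T"
    using S(1) \<open>i \<in> S\<close> fin by (auto simp: T_def)
  have "Suc (card T) = k"
    using card_Suc_Diff1[OF fin \<open>i \<in> S\<close>] S(2) by (simp add: T_def)
  then obtain C where C: "C \<in> N" "\<forall>B\<in>P. hamming_dist T C < hamming_dist T B"
    using hamming_rep_negative_witness[OF rep T(1)] by auto
  have "finite B" "finite C"
    using hamming_rep_finite[OF rep] B(1) C(1) by blast+
  moreover have "hamming_dist (insert i T) B < hamming_dist (insert i T) C"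
    using B(2) C(1) T(2) by blast
  ultimately show "i \<in> B"
    using hamming_dist_insert_separates(1)[OF T(4) _ _ T(3)] C(2) B(1) by blast
qed

lemma threshold_negative_witness_subset:
  assumes rep: "hamming_rep n (\<lambda>S. k \<le> card S) P N"
    and T: "T \<subseteq> {..<n}" "Suc (card T) = k"
    and C: "C \<in> N" "\<forall>B\<in>P. hamming_dist T C < hamming_dist T B"
  shows "C \<subseteq> T"
proof
  fix j assume "j \<in> C"
  show "j \<in> T"
  proof (rule ccontr)
    assume "j \<notin> T"
    have fin: "finite T" using T(1) finite_subset by blast
    have "C \<subseteq> {..<n}" using rep C(1) unfolding hamming_rep_def by blast
    then have "insert j T \<subseteq> {..<n}" "card (insert j T) = k"
      using T \<open>j \<in> C\<close> \<open>j \<notin> T\<close> fin by auto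
    then obtain B where B: "B \<in> P"
      "\<forall>C\<in>N. hamming_dist (insert j T) B < hamming_dist (insert j T) C"
      using hamming_rep_positive_witness[OF rep, of "insert j T"] by auto
    have "finite B" "finite C"
      using hamming_rep_finite[OF rep] B(1) C(1) by blast+
    then have "j \<notin> C"
      using hamming_dist_insert_separates(2)[OF fin _ _ \<open>j \<notin> T\<close>] B C by blast
    then show False using \<open>j \<in> C\<close> by contradiction
  qed
qed

text \<open>A positive prototype that is nearest to a minimal positive set \<open>S\<close> contains \<open>S\<close>, and
  it is closer to \<open>S\<close> than a negative prototype inside \<open>S\<close> is, hence has fewer than \<open>2 |S|\<close>
  elements.\<close>
lemma threshold_rep_cover:
  assumes rep: "hamming_rep n (\<lambda>S. k \<le> card S) P N" and "0 < k"
    and S: "S \<subseteq> {..<n}" "card S = k"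
  shows "\<exists>B\<in>P. S \<subseteq> B \<and> card B < 2 * k"
proof -
  have fin: "finite S" using S(1) finite_subset by blast
  obtain B where B: "B \<in> P" "\<forall>C\<in>N. hamming_dist S B < hamming_dist S C"
    using hamming_rep_positive_witness[OF rep S(1)] S(2) by blast
  have "S \<subseteq> B"
    using threshold_positive_witness_superset[OF rep S B] .
  obtain i where "i \<in> S" using S \<open>0 < k\<close> by force
  define T where "T = S - {i}"
  have T: "T \<subseteq> {..<n}" "Suc (card T) = k"
    using S \<open>i \<in> S\<close> card_Suc_Diff1[OF fin \<open>i \<in> S\<close>] by (auto simp: T_def)
  then obtain C where C: "C \<in> N" "\<forall>B\<in>P. hamming_dist T C < hamming_dist T B"
    using hamming_rep_negative_witness[OF rep T(1)] by auto
  have "C \<subseteq> S"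
    using threshold_negative_witness_subset[OF rep T C] by (auto simp: T_def)
  moreover have "finite C" "finite B"
    using hamming_rep_finite[OF rep] B(1) C(1) by blast+
  ultimately have "hamming_dist S C + 2 * card C = card S + card C"
    and "hamming_dist S B + 2 * card S = card S + card B"
    using hamming_dist_card[OF fin, of C] hamming_dist_card[OF fin, of B] \<open>S \<subseteq> B\<close>
    by (simp_all add: Int_absorb1 Int_absorb2)
  moreover have "hamming_dist S B < hamming_dist S C"
    using B(2) C(1) by blast
  ultimately show ?thesis
    using B(1) \<open>S \<subseteq> B\<close> S(2) by (intro bexI[of _ B]) auto
qed

lemma card_subsets_covered_le:
  assumes "finite F" and fin: "\<And>B. B \<in> F \<Longrightarrow> finite B"
    and cover: "\<And>S. S \<in> A \<Longrightarrow> \<exists>B\<in>F. S \<subseteq> B \<and> card B \<le> m"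
    and card_A: "\<And>S. S \<in> A \<Longrightarrow> card S = k"
  shows "card A \<le> card F * (m choose k)"
proof -
  define F' where "F' = {B \<in> F. card B \<le> m}"
  have "finite F'" using \<open>finite F\<close> by (simp add: F'_def)
  have "A \<subseteq> (\<Union>B\<in>F'. {S. S \<subseteq> B \<and> card S = k})"
    using cover card_A unfolding F'_def by blast
  then have "card A \<le> card (\<Union>B\<in>F'. {S. S \<subseteq> B \<and> card S = k})"
    using \<open>finite F'\<close> fin by (intro card_mono) (auto simp: F'_def)
  also have "\<dots> \<le> (\<Sum>B\<in>F'. card {S. S \<subseteq> B \<and> card S = k})"
    using \<open>finite F'\<close> by (rule card_UN_le)
  also have "\<dots> = (\<Sum>B\<in>F'. card B choose k)"
    using fin by (intro sum.cong refl n_subsets) (auto simp: F'_def)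
  also have "\<dots> \<le> (\<Sum>B\<in>F'. m choose k)"
    by (intro sum_mono binomial_right_mono) (auto simp: F'_def)
  also have "\<dots> \<le> card F * (m choose k)"
    using \<open>finite F\<close> by (simp add: F'_def card_mono)
  finally show ?thesis .
qed

lemma binomial_ratio_ge:
  assumes "k \<le> m" "m \<le> n" "0 < m"
  shows "(real n / real m) ^ k * real (m choose k) \<le> real (n choose k)"
proof -
  have factor: "real n / real m * (real (m - i) / real (k - i)) \<le> real (n - i) / real (k - i)"
    if "i < k" for i
  proof -
    have "real i * real m \<le> real i * real n"
      using assms by (intro mult_left_mono) auto
    then have "real n * real (m - i) \<le> real m * real (n - i)"
      using that assms by (simp add: of_nat_diff algebra_simps)
    then have "real n * real (m - i) / real m \<le> real (n - i)"
      using assms by (simp add: pos_divide_le_eq mult.commute)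
    then have "real n * real (m - i) / real m / real (k - i) \<le> real (n - i) / real (k - i)"
      by (rule divide_right_mono) simp
    then show ?thesis
      by simp
  qed
  have "(real n / real m) ^ k * real (m choose k)
      = (\<Prod>i = 0..<k. real n / real m) * (\<Prod>i = 0..<k. real (m - i) / real (k - i))"
    by (simp only: binomial_altdef_of_nat[OF assms(1)] prod_constant card_atLeastLessThan diff_zero)
  also have "\<dots> = (\<Prod>i = 0..<k. real n / real m * (real (m - i) / real (k - i)))"
    by (rule prod.distrib[symmetric])
  also have "\<dots> \<le> (\<Prod>i = 0..<k. real (n - i) / real (k - i))"
    using factor by (intro prod_mono) auto
  also have "\<dots> = real (n choose k)"
    using assms by (simp add: binomial_altdef_of_nat)
  finally show ?thesis .
qed

lemma threshold_rep_card_ge: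
  assumes rep: "hamming_rep n (\<lambda>S. k \<le> card S) P N" and "0 < k" "3 * k \<le> n"
  shows "(3 / 2) ^ k \<le> real (card (P \<union> N))"
proof -
  define m where "m = 2 * k - 1"
  have m: "k \<le> m" "m \<le> n" "0 < m" "3 * m \<le> 2 * n"
    using assms(2,3) by (auto simp: m_def)
  have "finite (P \<union> N)"
    using rep unfolding hamming_rep_def by (meson finite_Pow_iff finite_lessThan finite_subset)
  then have "finite P" by simp
  have "n choose k = card {S. S \<subseteq> {..<n} \<and> card S = k}"
    by (simp add: n_subsets)
  also have "\<dots> \<le> card P * (m choose k)"
  proof (rule card_subsets_covered_le[OF \<open>finite P\<close>])
    show "finite B" if "B \<in> P" for B
      using hamming_rep_finite[OF rep] that by blast
    show "\<exists>B\<in>P. S \<subseteq> B \<and> card B \<le> m" if "S \<in> {S. S \<subseteq> {..<n} \<and> card S = k}" for S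
    proof -
      have "S \<subseteq> {..<n}" "card S = k" using that by auto
      then obtain B where "B \<in> P" "S \<subseteq> B" "card B < 2 * k"
        using threshold_rep_cover[OF rep \<open>0 < k\<close>] by blast
      then show ?thesis by (auto simp: m_def)
    qed
  qed auto
  finally have "real (n choose k) \<le> real (card P) * real (m choose k)"
    by (metis of_nat_le_iff of_nat_mult)
  moreover have "(3 / 2) ^ k \<le> (real n / real m) ^ k"
    using m by (intro power_mono) (auto simp: field_simps)
  ultimately have "(3 / 2) ^ k * real (m choose k) \<le> real (card P) * real (m choose k)"
    using binomial_ratio_ge[OF m(1-3)] by (meson mult_right_mono of_nat_0_le_iff order_trans)
  then have "(3 / 2) ^ k \<le> real (card P)"
    using m(1) by (simp add: zero_less_binomial)
  also have "\<dots> \<le> real (card (P \<union> N))"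
    using \<open>finite (P \<union> N)\<close> by (simp add: card_mono)
  finally show ?thesis .
qed

lemma TH_indicator: "S \<subseteq> {..<n} \<Longrightarrow> TH n (real t) (indicat_real S) \<longleftrightarrow> t \<le> card S"
  unfolding TH_def by (simp add: sum_indicator_lessThan)

lemma BNN_TH_third_ge:
  assumes "3 \<le> n"
  shows "(3 / 2) ^ (n div 3) \<le> real (BNN n (TH n (of_int \<lfloor>real n / 3\<rfloor>)))"
proof -
  have "\<lfloor>real n / 3\<rfloor> = int (n div 3)"
    using floor_divide_of_nat_eq[of n 3] by simp
  then have t: "of_int \<lfloor>real n / 3\<rfloor> = real (n div 3)"
    by simp
  obtain P N where rep: "hamming_rep n (\<lambda>S. TH n (real (n div 3)) (indicat_real S)) P N"
    and card: "card (P \<union> N) = BNN n (TH n (real (n div 3)))"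
    using hamming_rep_card_BNN by blast
  have "hamming_rep n (\<lambda>S. n div 3 \<le> card S) P N"
    using rep by (subst hamming_rep_cong[where g' = "\<lambda>S. TH n (real (n div 3)) (indicat_real S)"])
      (simp_all add: TH_indicator)
  moreover have "0 < n div 3" "3 * (n div 3) \<le> n"
    using assms by auto
  ultimately show ?thesis
    using threshold_rep_card_ge card t by metis
qed

lemma two_powr_le_three_halves_pow:
  assumes "3 \<le> n"
  shows "2 powr (1 / 18 * real n) \<le> (3 / 2) ^ (n div 3)"
proof -
  define k where "k = n div 3"
  have "real n \<le> 9 * real k" using assms unfolding k_def by linarith
  then have "2 powr (1 / 18 * real n) \<le> 2 powr (real k / 2)"
    by (intro powr_mono) auto
  also have "\<dots> = sqrt 2 ^ k"
    by (simp add: powr_half_sqrt[symmetric] powr_powr powr_realpow[symmetric] mult.commute)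
  also have "\<dots> \<le> (3 / 2) ^ k"
    by (intro power_mono real_le_lsqrt) (auto simp: power2_eq_square)
  finally show ?thesis unfolding k_def .
qed

theorem theorem2:
  shows "(\<forall>n f. threshold_fun n f \<and> (\<exists>a\<in>cube n. f a) \<and> (\<exists>a\<in>cube n. \<not> f a)
              \<longrightarrow> NN n f = 2)
       \<and> (\<forall>n. odd n \<longrightarrow> BNN n (MAJ n) = 2)
       \<and> (\<forall>n. even n \<longrightarrow> real (BNN n (MAJ n)) \<le> real n / 2 + 2)
       \<and> (\<exists>c>0. \<exists>n0. \<forall>n\<ge>n0.
              real (BNN n (TH n (of_int \<lfloor>real n / 3\<rfloor>))) \<ge> 2 powr (c * real n))"
proof (intro conjI allI impI)
  fix n f
  assume "threshold_fun n f \<and> (\<exists>a\<in>cube n. f a) \<and> (\<exists>a\<in>cube n. \<not> f a)"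
  then show "NN n f = 2"
    using NN_threshold_fun by blast
next
  fix n :: nat
  assume "odd n"
  then show "BNN n (MAJ n) = 2"
    by (rule BNN_MAJ_odd)
next
  fix n :: nat
  assume "even n"
  then show "real (BNN n (MAJ n)) \<le> real n / 2 + 2"
    using BNN_MAJ_even[of n] by (auto elim!: evenE)
next
  show "\<exists>c>0. \<exists>n0. \<forall>n\<ge>n0. real (BNN n (TH n (of_int \<lfloor>real n / 3\<rfloor>))) \<ge> 2 powr (c * real n)"
    using two_powr_le_three_halves_pow BNN_TH_third_ge
    by (intro exI[of _ "1 / 18"] exI[of _ 3] conjI allI impI) (auto intro: order_trans)
qed

end
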